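(* Let $p_1,\dots,p_9$ be general points in $\mathbb{P}^5$ and let $C$ be the (unique) elliptic normal sextic curve in $\mathbb{P}^5$ passing through these points. Then every cubic hypersurface in $\mathbb{P}^5$ that is singular at $p_1,\dots,p_9$ contains the secant variety $\sigma_2(C)$ and is singular along $C$.
   Context: An elliptic normal sextic curve in $\mathbb{P}^5$ is a smooth genus one curve embedded by a complete linear system of degree $6$; through $9$ general points of $\mathbb{P}^5$ there is exactly one such curve. $\sigma_2(C)$ denotes the variety of secant lines of $C$, i.e. the Zariski closure of the union of all lines joining two points of $C$. A hypersurface is singular at a point if its equation and all first partial derivatives vanish there. *)

theory Defs
  imports "HOL-Analysis.Analysis"
begin

text \<open>Points of projective 5-space are represented by nonzero homogeneous coordinate
vectors in complex^6; subvarieties by the cones of their coordinate vectors (without 0).\<close>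

definition hom_poly :: "nat \<Rightarrow> (complex^6 \<Rightarrow> complex) \<Rightarrow> bool" where
  "hom_poly d F \<longleftrightarrow> (\<exists>c :: (6 \<Rightarrow> nat) \<Rightarrow> complex.
     F = (\<lambda>x. \<Sum>\<alpha>\<in>{\<alpha>. sum \<alpha> UNIV = d}. c \<alpha> * (\<Prod>i\<in>UNIV. (x$i) ^ (\<alpha> i))))"

definition polyfun :: "((('i::finite) \<Rightarrow> complex) \<Rightarrow> complex) \<Rightarrow> bool" where
  "polyfun G \<longleftrightarrow> (\<exists>(A :: ('i \<Rightarrow> nat) set) c. finite A \<and>
     G = (\<lambda>z. \<Sum>\<alpha>\<in>A. c \<alpha> * (\<Prod>i\<in>UNIV. (z i) ^ (\<alpha> i))))"

definition partial :: "(complex^6 \<Rightarrow> complex) \<Rightarrow> 6 \<Rightarrow> complex^6 \<Rightarrow> complex" where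
  "partial F i x = deriv (\<lambda>t. F (\<chi> j. if j = i then x$j + t else x$j)) 0"

definition singular_at :: "(complex^6 \<Rightarrow> complex) \<Rightarrow> complex^6 \<Rightarrow> bool" where
  "singular_at F x \<longleftrightarrow> F x = 0 \<and> (\<forall>i. partial F i x = 0)"

definition zariski_closure :: "(complex^6) set \<Rightarrow> (complex^6) set" where
  "zariski_closure S = {x. x \<noteq> 0 \<and>
     (\<forall>d F. hom_poly d F \<and> (\<forall>y\<in>S. F y = 0) \<longrightarrow> F x = 0)}"

definition cone :: "(complex^6) set \<Rightarrow> (complex^6) set" where
  "cone S = {t *s v | t v. t \<noteq> 0 \<and> v \<in> S}"

text \<open>Elliptic normal sextic curves: images, under a projective linear transformation,
of a smooth plane cubic y^2 = x^3 + a x + b embedded by the complete linear system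
|6 O| with basis 1, x, y, x^2, x y, x^3 (the point O at infinity goes to [0:...:0:1]).
Over the complex numbers every smooth genus one curve embedded by a complete linear
system of degree 6 is of this form.\<close>
definition weierstrass_sextic :: "complex \<Rightarrow> complex \<Rightarrow> (complex^6) set" where
  "weierstrass_sextic a b =
     {vector [1, x, y, x^2, x*y, x^3] | x y. y^2 = x^3 + a*x + b} \<union> {vector [0,0,0,0,0,1]}"

definition ell_normal_sextic :: "(complex^6) set \<Rightarrow> bool" where
  "ell_normal_sextic C \<longleftrightarrow> (\<exists>a b (A :: complex^6^6).
     4*a^3 + 27*b^2 \<noteq> 0 \<and> invertible A \<and>
     C = cone ((\<lambda>v. A *v v) ` weierstrass_sextic a b))"

definition secant_variety :: "(complex^6) set \<Rightarrow> (complex^6) set" where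
  "secant_variety C = zariski_closure
     {s *s u + t *s v | s t u v. u \<in> C \<and> v \<in> C \<and> (\<forall>r. v \<noteq> r *s u) \<and>
        s *s u + t *s v \<noteq> 0}"

end

theory Submission
  imports Defs
begin

text \<open>In Weierstrass coordinates the cubics singular along an elliptic normal sextic C contain
  an explicit pencil, spanned by two cubics Q1 and Q2 that have a double zero at every point of C.
  A cubic with double zeros at two points vanishes on the line joining them, so every member of
  the pencil contains the secant variety. Conversely, being singular at nine points imposes
  9 * 6 = 54 linear conditions on the 56 coefficients of a cubic. Leaving out the coefficients of
  x0 x2 x4 and x0 x2 x5 gives a 54 x 54 matrix whose determinant G is a polynomial in the points,
  and G does not vanish at an explicit configuration. Whenever G(p) is nonzero, a cubic singular
  at the points p is determined by those two coefficients; since Q1 and Q2 are singular at the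
  points of C and independent, every such cubic lies in the pencil.\<close>

definition monomial :: "('i::finite \<Rightarrow> nat) \<Rightarrow> ('i \<Rightarrow> complex) \<Rightarrow> complex" where
  "monomial \<alpha> z = (\<Prod>i\<in>UNIV. z i ^ \<alpha> i)"

lemma polyfun_iff_monomials:
  "polyfun G \<longleftrightarrow> (\<exists>A c. finite A \<and> G = (\<lambda>z. \<Sum>\<alpha>\<in>A. c \<alpha> * monomial \<alpha> z))"
  by (simp add: polyfun_def monomial_def)

lemma monomial_add: "monomial (\<lambda>i. \<alpha> i + \<beta> i) z = monomial \<alpha> z * monomial \<beta> z"
  by (simp add: monomial_def power_add prod.distrib)

lemma polyfun_const: "polyfun (\<lambda>z::'i::finite \<Rightarrow> complex. k)"
  unfolding polyfun_iff_monomials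
  by (rule exI[of _ "{\<lambda>_. 0}"], rule exI[of _ "\<lambda>_. k"]) (simp add: monomial_def)

lemma polyfun_var: "polyfun (\<lambda>z::'i::finite \<Rightarrow> complex. z j)"
proof -
  have "monomial (\<lambda>i. if i = j then 1 else 0) z = z j" for z :: "'i \<Rightarrow> complex"
  proof -
    have "monomial (\<lambda>i. if i = j then 1 else 0) z = (\<Prod>i\<in>UNIV. if i = j then z i else 1)"
      unfolding monomial_def by (rule prod.cong) auto
    then show ?thesis by simp
  qed
  then show ?thesis unfolding polyfun_iff_monomials
    by (intro exI[of _ "{\<lambda>i. if i = j then 1 else 0}"] exI[of _ "\<lambda>_. 1"]) auto
qed

lemma polyfun_add:
  assumes "polyfun f" "polyfun (g :: ('i::finite \<Rightarrow> complex) \<Rightarrow> complex)"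
  shows "polyfun (\<lambda>z. f z + g z)"
proof -
  obtain A c where A: "finite A" "f = (\<lambda>z. \<Sum>\<alpha>\<in>A. c \<alpha> * monomial \<alpha> z)"
    using assms(1) unfolding polyfun_iff_monomials by blast
  obtain B d where B: "finite B" "g = (\<lambda>z. \<Sum>\<alpha>\<in>B. d \<alpha> * monomial \<alpha> z)"
    using assms(2) unfolding polyfun_iff_monomials by blast
  define e where "e \<alpha> = (if \<alpha> \<in> A then c \<alpha> else 0) + (if \<alpha> \<in> B then d \<alpha> else 0)" for \<alpha>
  have "(\<Sum>\<alpha>\<in>A \<union> B. e \<alpha> * monomial \<alpha> z) = f z + g z" for z
  proof -
    have "(\<Sum>\<alpha>\<in>A \<union> B. e \<alpha> * monomial \<alpha> z) =
        (\<Sum>\<alpha>\<in>A \<union> B. if \<alpha> \<in> A then c \<alpha> * monomial \<alpha> z else 0) +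
        (\<Sum>\<alpha>\<in>A \<union> B. if \<alpha> \<in> B then d \<alpha> * monomial \<alpha> z else 0)"
      unfolding e_def sum.distrib[symmetric] by (rule sum.cong) (auto simp: distrib_right)
    also have "\<dots> = f z + g z"
      using A B by (simp add: sum.inter_restrict[symmetric] Int_absorb1)
    finally show ?thesis .
  qed
  then show ?thesis unfolding polyfun_iff_monomials using A(1) B(1)
    by (intro exI[of _ "A \<union> B"] exI[of _ e]) auto
qed

lemma polyfun_mult:
  assumes "polyfun f" "polyfun (g :: ('i::finite \<Rightarrow> complex) \<Rightarrow> complex)"
  shows "polyfun (\<lambda>z. f z * g z)"
proof -
  obtain A c where A: "finite A" "f = (\<lambda>z. \<Sum>\<alpha>\<in>A. c \<alpha> * monomial \<alpha> z)"
    using assms(1) unfolding polyfun_iff_monomials by blast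
  obtain B d where B: "finite B" "g = (\<lambda>z. \<Sum>\<alpha>\<in>B. d \<alpha> * monomial \<alpha> z)"
    using assms(2) unfolding polyfun_iff_monomials by blast
  define h where "h p = (\<lambda>i. fst p i + snd p i)" for p :: "('i \<Rightarrow> nat) \<times> ('i \<Rightarrow> nat)"
  define e where "e \<gamma> = (\<Sum>p\<in>{p. p \<in> A \<times> B \<and> h p = \<gamma>}. c (fst p) * d (snd p))" for \<gamma>
  have fin: "finite (A \<times> B)" using A(1) B(1) by simp
  have "(\<Sum>\<gamma>\<in>h ` (A \<times> B). e \<gamma> * monomial \<gamma> z) = f z * g z" for z
  proof -
    have "f z * g z = (\<Sum>\<alpha>\<in>A. \<Sum>\<beta>\<in>B. c \<alpha> * monomial \<alpha> z * (d \<beta> * monomial \<beta> z))"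
      unfolding A(2) B(2) by (rule sum_product)
    also have "\<dots> = (\<Sum>p\<in>A \<times> B. c (fst p) * d (snd p) * monomial (h p) z)"
      unfolding sum.cartesian_product h_def
      by (intro sum.cong refl) (auto simp: monomial_add mult_ac)
    also have "\<dots> = (\<Sum>\<gamma>\<in>h ` (A \<times> B).
        \<Sum>p\<in>{p. p \<in> A \<times> B \<and> h p = \<gamma>}. c (fst p) * d (snd p) * monomial (h p) z)"
      by (rule sum.group[symmetric]) (use fin in auto)
    also have "\<dots> = (\<Sum>\<gamma>\<in>h ` (A \<times> B). e \<gamma> * monomial \<gamma> z)"
      unfolding e_def sum_distrib_right by (intro sum.cong refl) auto
    finally show ?thesis by simp
  qed
  then show ?thesis unfolding polyfun_iff_monomials using fin
    by (intro exI[of _ "h ` (A \<times> B)"] exI[of _ e]) auto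
qed

lemma polyfun_sum:
  assumes "finite S" "\<And>s. s \<in> S \<Longrightarrow> polyfun (f s :: ('i::finite \<Rightarrow> complex) \<Rightarrow> complex)"
  shows "polyfun (\<lambda>z. \<Sum>s\<in>S. f s z)"
  using assms by (induction S rule: finite_induct) (simp_all add: polyfun_const polyfun_add)

lemma polyfun_prod:
  assumes "finite S" "\<And>s. s \<in> S \<Longrightarrow> polyfun (f s :: ('i::finite \<Rightarrow> complex) \<Rightarrow> complex)"
  shows "polyfun (\<lambda>z. \<Prod>s\<in>S. f s z)"
  using assms by (induction S rule: finite_induct) (simp_all add: polyfun_const polyfun_mult)

lemma monomial_Suc_degree:
  assumes "sum \<alpha> UNIV = Suc n"
  obtains a \<beta> where "sum \<beta> UNIV = n" "\<And>z. monomial \<alpha> z = z a * monomial \<beta> z"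
proof -
  obtain a where a: "\<alpha> a > 0"
    using assms by (metis Zero_not_Suc gr0I sum.neutral_const sum.not_neutral_contains_not_neutral)
  define \<beta> where "\<beta> = \<alpha>(a := \<alpha> a - 1)"
  have "sum \<alpha> UNIV = \<alpha> a + sum \<alpha> (UNIV - {a})" "sum \<beta> UNIV = \<beta> a + sum \<beta> (UNIV - {a})"
    by (simp_all add: sum.remove)
  moreover have "sum \<beta> (UNIV - {a}) = sum \<alpha> (UNIV - {a})"
    unfolding \<beta>_def by (rule sum.cong) auto
  ultimately have "sum \<beta> UNIV = n" using assms a unfolding \<beta>_def by simp
  moreover have "monomial \<alpha> z = z a * monomial \<beta> z" for z
  proof -
    have "(\<Prod>i\<in>UNIV - {a}. z i ^ \<beta> i) = (\<Prod>i\<in>UNIV - {a}. z i ^ \<alpha> i)"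
      unfolding \<beta>_def by (rule prod.cong) auto
    moreover have "\<alpha> a = Suc (\<beta> a)" unfolding \<beta>_def using a by simp
    ultimately show ?thesis
      unfolding monomial_def prod.remove[of UNIV a, OF finite UNIV_I] by simp
  qed
  ultimately show ?thesis using that by blast
qed

lemma monomial_eq_prod_vars:
  assumes "sum \<alpha> UNIV = n"
  obtains f where "\<And>z. monomial \<alpha> z = (\<Prod>j<n. z (f j))"
  using assms
proof (induction n arbitrary: \<alpha> thesis)
  case 0
  then have "monomial \<alpha> z = 1" for z by (simp add: monomial_def)
  then show ?case using 0 by simp
next
  case (Suc n)
  obtain a \<beta> where \<beta>: "sum \<beta> UNIV = n" "\<And>z. monomial \<alpha> z = z a * monomial \<beta> z"
    using monomial_Suc_degree[OF Suc.prems(2)] by blast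
  obtain f where f: "\<And>z. monomial \<beta> z = (\<Prod>j<n. z (f j))"
    using Suc.IH \<beta>(1) by blast
  have "monomial \<alpha> z = (\<Prod>j<Suc n. z ((f(n := a)) j))" for z
    by (simp add: \<beta>(2) f mult.commute)
  then show ?case by (rule Suc.prems(1))
qed

lemma finite_degree_exponents: "finite {\<alpha> :: 'i::finite \<Rightarrow> nat. sum \<alpha> UNIV = d}"
proof (rule finite_subset)
  show "{\<alpha> :: 'i \<Rightarrow> nat. sum \<alpha> UNIV = d} \<subseteq> PiE UNIV (\<lambda>_. {..d})"
  proof
    fix \<alpha> :: "'i \<Rightarrow> nat" assume "\<alpha> \<in> {\<alpha>. sum \<alpha> UNIV = d}"
    then have "\<alpha> i \<le> d" for i using member_le_sum[of i UNIV \<alpha>] by simp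
    then show "\<alpha> \<in> PiE UNIV (\<lambda>_. {..d})" by (simp add: PiE_UNIV_domain)
  qed
  show "finite (PiE UNIV (\<lambda>_. {..d}) :: ('i \<Rightarrow> nat) set)" by (rule finite_PiE) auto
qed

section \<open>Cubic forms\<close>

definition mono3 :: "'n \<times> 'n \<times> 'n \<Rightarrow> complex^'n \<Rightarrow> complex" where
  "mono3 t x = (case t of (a, b, c) \<Rightarrow> x$a * x$b * x$c)"

definition mono3_polar :: "'n \<times> 'n \<times> 'n \<Rightarrow> complex^'n \<Rightarrow> complex^'n \<Rightarrow> complex" where
  "mono3_polar t u v = (case t of (a, b, c) \<Rightarrow> v$a * u$b * u$c + u$a * v$b * u$c + u$a * u$b * v$c)"

definition cubic_monos :: "('n::linorder \<times> 'n \<times> 'n) set" where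
  "cubic_monos = {(a, b, c). a \<le> b \<and> b \<le> c}"

definition cubic :: "('n::{finite,linorder} \<times> 'n \<times> 'n \<Rightarrow> complex) \<Rightarrow> (complex, 'n) vec \<Rightarrow> complex" where
  "cubic d x = (\<Sum>t\<in>cubic_monos. d t * mono3 t x)"

definition cubic_polar ::
    "('n::{finite,linorder} \<times> 'n \<times> 'n \<Rightarrow> complex) \<Rightarrow> (complex, 'n) vec \<Rightarrow> (complex, 'n) vec \<Rightarrow> complex" where
  "cubic_polar d u v = (\<Sum>t\<in>cubic_monos. d t * mono3_polar t u v)"

definition cubic_form :: "((complex, 'n::{finite,linorder}) vec \<Rightarrow> complex) \<Rightarrow> bool" where
  "cubic_form F \<longleftrightarrow> (\<exists>d. F = cubic d)"

lemma mono3_sorted: "\<exists>s\<in>cubic_monos. mono3 s = mono3 (t :: 'n::{finite,linorder} \<times> _)"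
proof -
  obtain a b c where t: "t = (a, b, c)" by (cases t) auto
  have "mono3 (a, b, c) = mono3 s" if "s \<in> {(a, b, c), (a, c, b), (b, a, c), (b, c, a), (c, a, b), (c, b, a)}" for s
    using that by (auto simp: fun_eq_iff mono3_def mult_ac)
  moreover have "\<exists>s\<in>{(a, b, c), (a, c, b), (b, a, c), (b, c, a), (c, a, b), (c, b, a)}. s \<in> cubic_monos"
    by (rule le_cases3[of a b c]) (auto simp: cubic_monos_def)
  ultimately show ?thesis unfolding t by metis
qed

lemma cubic_form_mono3: "cubic_form (mono3 t)"
proof -
  obtain s where s: "s \<in> cubic_monos" "mono3 s = mono3 t" using mono3_sorted by blast
  have "cubic (\<lambda>r. if r = s then 1 else 0) x = mono3 s x" for x
  proof -
    have "cubic (\<lambda>r. if r = s then 1 else 0) x = (\<Sum>r\<in>cubic_monos. if r = s then mono3 r x else 0)"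
      unfolding cubic_def by (rule sum.cong) auto
    also have "\<dots> = mono3 s x" using s(1) by simp
    finally show ?thesis .
  qed
  then have "mono3 s = cubic (\<lambda>r. if r = s then 1 else 0)" by (simp add: fun_eq_iff)
  then show ?thesis unfolding cubic_form_def s(2)[symmetric] by blast
qed

lemma cubic_add: "cubic (\<lambda>t. d t + e t) x = cubic d x + cubic e x"
  by (simp add: cubic_def distrib_right sum.distrib)

lemma cubic_cmult: "cubic (\<lambda>t. c * d t) x = c * cubic d x"
  by (simp add: cubic_def sum_distrib_left mult.assoc)

lemma cubic_polar_add: "cubic_polar (\<lambda>t. d t + e t) u v = cubic_polar d u v + cubic_polar e u v"
  by (simp add: cubic_polar_def distrib_right sum.distrib)

lemma cubic_polar_cmult: "cubic_polar (\<lambda>t. c * d t) u v = c * cubic_polar d u v"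
  by (simp add: cubic_polar_def sum_distrib_left mult.assoc)

lemma cubic_form_add:
  assumes "cubic_form F" "cubic_form G"
  shows "cubic_form (\<lambda>x. F x + G x)"
proof -
  obtain d e where "F = cubic d" "G = cubic e" using assms unfolding cubic_form_def by blast
  then have "(\<lambda>x. F x + G x) = cubic (\<lambda>t. d t + e t)" by (simp add: fun_eq_iff cubic_add)
  then show ?thesis unfolding cubic_form_def by blast
qed

lemma cubic_form_cmult:
  assumes "cubic_form F"
  shows "cubic_form (\<lambda>x. c * F x)"
proof -
  obtain d where "F = cubic d" using assms unfolding cubic_form_def by blast
  then have "(\<lambda>x. c * F x) = cubic (\<lambda>t. c * d t)" by (simp add: fun_eq_iff cubic_cmult)
  then show ?thesis unfolding cubic_form_def by blast
qed

lemma cubic_form_diff: "cubic_form F \<Longrightarrow> cubic_form G \<Longrightarrow> cubic_form (\<lambda>x. F x - G x)"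
  using cubic_form_add[of F "\<lambda>x. -1 * G x"] cubic_form_cmult[of G "-1"] by simp

lemma cubic_form_sum:
  "finite S \<Longrightarrow> (\<And>s. s \<in> S \<Longrightarrow> cubic_form (F s)) \<Longrightarrow> cubic_form (\<lambda>x. \<Sum>s\<in>S. F s x)"
proof (induction S rule: finite_induct)
  case empty
  show ?case unfolding cubic_form_def
    by (rule exI[of _ "\<lambda>_. 0"]) (simp add: fun_eq_iff cubic_def)
next
  case (insert s S)
  then show ?case by (simp add: cubic_form_add)
qed

lemma mono3_matrix_vector_mult:
  "mono3 (a, b, c) (B *v x) =
    (\<Sum>j\<in>UNIV. \<Sum>k\<in>UNIV. \<Sum>l\<in>UNIV. (B$a$j * B$b$k * B$c$l) * mono3 (j, k, l) x)"
proof -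
  have "mono3 (a, b, c) (B *v x) =
      (\<Sum>j\<in>UNIV. B$a$j * x$j) * ((\<Sum>k\<in>UNIV. B$b$k * x$k) * (\<Sum>l\<in>UNIV. B$c$l * x$l))"
    by (simp add: mono3_def matrix_vector_mult_def mult.assoc)
  also have "\<dots> = (\<Sum>j\<in>UNIV. B$a$j * x$j) * (\<Sum>k\<in>UNIV. \<Sum>l\<in>UNIV. (B$b$k * x$k) * (B$c$l * x$l))"
    by (simp only: sum_product)
  also have "\<dots> = (\<Sum>j\<in>UNIV. \<Sum>k\<in>UNIV. \<Sum>l\<in>UNIV. (B$a$j * x$j) * ((B$b$k * x$k) * (B$c$l * x$l)))"
    by (simp only: sum_distrib_right) (simp only: sum_distrib_left)
  also have "\<dots> = (\<Sum>j\<in>UNIV. \<Sum>k\<in>UNIV. \<Sum>l\<in>UNIV. (B$a$j * B$b$k * B$c$l) * mono3 (j, k, l) x)"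
    by (simp add: mono3_def mult_ac)
  finally show ?thesis .
qed

lemma cubic_form_compose_matrix:
  assumes "cubic_form F"
  shows "cubic_form (\<lambda>x. F (B *v x))"
proof -
  obtain d where F: "F = cubic d" using assms unfolding cubic_form_def by blast
  have "cubic_form (\<lambda>x. mono3 t (B *v x))" for t
    by (cases t) (simp add: mono3_matrix_vector_mult cubic_form_sum cubic_form_cmult cubic_form_mono3)
  then show ?thesis
    unfolding F cubic_def by (intro cubic_form_sum cubic_form_cmult) simp_all
qed

lemma monomial_degree3:
  fixes \<alpha> :: "'n::finite \<Rightarrow> nat"
  assumes "sum \<alpha> UNIV = 3"
  obtains t where "\<And>x. monomial \<alpha> (vec_nth x) = mono3 t x"
proof -
  obtain f where "\<And>z. monomial \<alpha> z = (\<Prod>j<(3::nat). z (f j))"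
    using monomial_eq_prod_vars[OF assms] by blast
  then have "monomial \<alpha> (vec_nth x) = mono3 (f 0, f 1, f 2) x" for x
    by (simp add: mono3_def numeral_3_eq_3 numeral_2_eq_2 mult_ac)
  then show ?thesis by (rule that)
qed

lemma hom_poly3_cubic_form:
  assumes "hom_poly 3 F"
  shows "cubic_form F"
proof -
  obtain c where F: "F = (\<lambda>x. \<Sum>\<alpha>\<in>{\<alpha>. sum \<alpha> UNIV = 3}. c \<alpha> * monomial \<alpha> (vec_nth x))"
    using assms unfolding hom_poly_def monomial_def by blast
  have monomial_cubic: "cubic_form (\<lambda>x. monomial \<alpha> (vec_nth x))"
    if degree: "sum \<alpha> UNIV = 3" for \<alpha> :: "6 \<Rightarrow> nat"
  proof -
    obtain t where "\<And>x. monomial \<alpha> (vec_nth x) = mono3 t x"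
      using monomial_degree3[OF degree] by blast
    then show ?thesis using cubic_form_mono3[of t] by (simp add: fun_eq_iff)
  qed
  show ?thesis
    unfolding F by (intro cubic_form_sum cubic_form_cmult finite_degree_exponents monomial_cubic) simp
qed

lemma mono3_line:
  "mono3 t (s *s u + r *s v) = s^3 * mono3 t u + s^2 * r * mono3_polar t u v
     + s * r^2 * mono3_polar t v u + r^3 * mono3 t v"
  by (cases t) (simp add: mono3_def mono3_polar_def algebra_simps power2_eq_square power3_eq_cube)

lemma cubic_line:
  "cubic d (s *s u + r *s v) = s^3 * cubic d u + s^2 * r * cubic_polar d u v
     + s * r^2 * cubic_polar d v u + r^3 * cubic d v"
  unfolding cubic_def cubic_polar_def mono3_line
  by (simp add: sum.distrib sum_distrib_left distrib_left mult.left_commute)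

lemma cubic_scale: "cubic d (s *s u) = s^3 * cubic d u"
  using cubic_line[of d s u 0 u] by simp

lemma cubic_polar_scale: "cubic_polar d (s *s u) v = s^2 * cubic_polar d u v"
proof -
  have "mono3_polar t (s *s u) v = s^2 * mono3_polar t u v" for t
    by (cases t) (simp add: mono3_polar_def algebra_simps power2_eq_square)
  then show ?thesis by (simp add: cubic_polar_def sum_distrib_left mult.left_commute)
qed

lemma cubic_has_derivative_along:
  "((\<lambda>r. cubic d (u + r *s v)) has_field_derivative cubic_polar d u v) (at 0)"
proof -
  have "cubic d (u + r *s v) = cubic d u + r * cubic_polar d u v + r^2 * cubic_polar d v u
      + r^3 * cubic d v" for r
    using cubic_line[of d 1 u r v] by simp
  moreover have "((\<lambda>r. cubic d u + r * cubic_polar d u v + r^2 * cubic_polar d v u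
      + r^3 * cubic d v) has_field_derivative cubic_polar d u v) (at 0)"
    by (auto intro!: derivative_eq_intros)
  ultimately show ?thesis by simp
qed

lemma coordinate_line_eq: "(\<chi> j. if j = i then x$j + t else x$j) = x + t *s axis i (1::complex)"
  by (simp add: vec_eq_iff axis_def)

lemma partial_cubic: "partial (cubic d) i u = cubic_polar d u (axis i 1)"
  unfolding partial_def coordinate_line_eq
  by (rule DERIV_imp_deriv) (rule cubic_has_derivative_along)

section \<open>Double zeros\<close>

definition double_zero_at :: "(complex^'n \<Rightarrow> complex) \<Rightarrow> complex^'n \<Rightarrow> bool" where
  "double_zero_at F u \<longleftrightarrow>
     F u = 0 \<and> (\<forall>v. ((\<lambda>r. F (u + r *s v)) has_field_derivative 0) (at 0))"

lemma double_zero_at_imp_singular_at: "double_zero_at F u \<Longrightarrow> singular_at F u"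
  unfolding double_zero_at_def singular_at_def partial_def coordinate_line_eq
  by (auto intro: DERIV_imp_deriv)

lemma double_zero_at_lincomb:
  "double_zero_at F u \<Longrightarrow> double_zero_at G u \<Longrightarrow> double_zero_at (\<lambda>x. c1 * F x + c2 * G x) u"
  unfolding double_zero_at_def by (auto intro!: derivative_eq_intros)

lemma double_zero_at_compose_matrix:
  "double_zero_at F (B *v u) \<Longrightarrow> double_zero_at (\<lambda>x. F (B *v x)) u"
  unfolding double_zero_at_def
  by (simp add: matrix_vector_right_distrib vector_scalar_commute)

lemma double_zero_at_cubic_iff:
  "double_zero_at (cubic d) u \<longleftrightarrow> cubic d u = 0 \<and> (\<forall>v. cubic_polar d u v = 0)"
  unfolding double_zero_at_def
  using cubic_has_derivative_along DERIV_unique by metis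

lemma double_zero_at_scale:
  assumes "cubic_form F" "double_zero_at F u"
  shows "double_zero_at F (s *s u)"
  using assms unfolding cubic_form_def
  by (auto simp: double_zero_at_cubic_iff cubic_scale cubic_polar_scale)

lemma cubic_vanishes_on_line:
  assumes "cubic_form F" "double_zero_at F u" "double_zero_at F v"
  shows "F (s *s u + t *s v) = 0"
  using assms unfolding cubic_form_def
  by (auto simp: double_zero_at_cubic_iff cubic_line)

section \<open>The pencil of cubics singular along a Weierstrass sextic\<close>

lemma vector6_nth [simp]:
  "(vector [a0, a1, a2, a3, a4, a5] :: 'a::zero^6) $ 1 = a0"
  "(vector [a0, a1, a2, a3, a4, a5] :: 'a::zero^6) $ 2 = a1"
  "(vector [a0, a1, a2, a3, a4, a5] :: 'a::zero^6) $ 3 = a2"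
  "(vector [a0, a1, a2, a3, a4, a5] :: 'a::zero^6) $ 4 = a3"
  "(vector [a0, a1, a2, a3, a4, a5] :: 'a::zero^6) $ 5 = a4"
  "(vector [a0, a1, a2, a3, a4, a5] :: 'a::zero^6) $ 6 = a5"
  by (simp_all add: vector_def)

text \<open>Coordinates are numbered u$1, ..., u$6 as in vector [1, x, y, x^2, x*y, x^3] (so u$6 is u$0).
  The first cubic is the determinant of ((u$1, u$2, u$3), (u$2, u$4, u$5), (u$3, u$5, u$6 + a*u$2 + b*u$1)),
  a matrix which on the curve is (1, x, y)^T (1, x, y) and hence has rank one.\<close>

definition weierstrass_cubic1 :: "complex \<Rightarrow> complex \<Rightarrow> complex^6 \<Rightarrow> complex" where
  "weierstrass_cubic1 a b u =
     u$1 * u$4 * u$6 - u$1 * u$5 * u$5 - u$2 * u$2 * u$6 + 2 * (u$2 * u$3 * u$5) - u$3 * u$3 * u$4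
     + a * (u$1 * u$2 * u$4 - u$2 * u$2 * u$2) + b * (u$1 * u$1 * u$4 - u$1 * u$2 * u$2)"

definition weierstrass_cubic2 :: "complex \<Rightarrow> complex \<Rightarrow> complex^6 \<Rightarrow> complex" where
  "weierstrass_cubic2 a b u =
     u$4 * u$4 * u$4 - 2 * (u$3 * u$4 * u$5) + u$2 * u$5 * u$5 + u$3 * u$3 * u$6 - u$2 * u$4 * u$6
     + a * (u$1 * u$4 * u$4 - u$1 * u$2 * u$6)
     + b * (2 * (u$1 * u$2 * u$4) - u$1 * u$1 * u$6 - u$2 * u$2 * u$2)"

lemma cubic_form_coord_product: "cubic_form (\<lambda>u. u$i * u$j * u$k)"
proof -
  have "mono3 (i, j, k) = (\<lambda>u. u$i * u$j * u$k)" by (simp add: fun_eq_iff mono3_def)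
  then show ?thesis using cubic_form_mono3[of "(i, j, k)"] by simp
qed

lemma cubic_form_weierstrass_cubic1: "cubic_form (weierstrass_cubic1 a b)"
  unfolding weierstrass_cubic1_def
  by (intro cubic_form_add cubic_form_diff cubic_form_cmult cubic_form_coord_product)

lemma cubic_form_weierstrass_cubic2: "cubic_form (weierstrass_cubic2 a b)"
  unfolding weierstrass_cubic2_def
  by (intro cubic_form_add cubic_form_diff cubic_form_cmult cubic_form_coord_product)

lemma weierstrass_cubics_double_zero:
  assumes "w \<in> weierstrass_sextic a b"
  shows "double_zero_at (weierstrass_cubic1 a b) w" "double_zero_at (weierstrass_cubic2 a b) w"
proof -
  have "double_zero_at (weierstrass_cubic1 a b) (vector [1, x, y, x^2, x*y, x^3])"
    "double_zero_at (weierstrass_cubic2 a b) (vector [1, x, y, x^2, x*y, x^3])"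
    if "y^2 = x^3 + a*x + b" for x y
    using that unfolding double_zero_at_def weierstrass_cubic1_def weierstrass_cubic2_def
    by (auto intro!: derivative_eq_intros) algebra+
  moreover have "double_zero_at (weierstrass_cubic1 a b) (vector [0, 0, 0, 0, 0, 1])"
    "double_zero_at (weierstrass_cubic2 a b) (vector [0, 0, 0, 0, 0, 1])"
    unfolding double_zero_at_def weierstrass_cubic1_def weierstrass_cubic2_def
    by (auto intro!: derivative_eq_intros)
  ultimately show "double_zero_at (weierstrass_cubic1 a b) w" "double_zero_at (weierstrass_cubic2 a b) w"
    using assms unfolding weierstrass_sextic_def by blast+
qed

lemma double_zero_on_sextic:
  assumes "B ** A = mat 1" "x \<in> cone ((\<lambda>v. A *v v) ` weierstrass_sextic a b)"
    and "cubic_form Q" "\<And>w. w \<in> weierstrass_sextic a b \<Longrightarrow> double_zero_at Q w"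
  shows "double_zero_at (\<lambda>x. Q (B *v x)) x"
proof -
  obtain s w where w: "w \<in> weierstrass_sextic a b" "x = s *s (A *v w)"
    using assms(2) unfolding cone_def by blast
  have "B *v x = s *s w"
    unfolding w(2) vector_scalar_commute matrix_vector_mul_assoc assms(1) by simp
  then show ?thesis
    using double_zero_at_scale[OF assms(3) assms(4)[OF w(1)]] by (simp add: double_zero_at_compose_matrix)
qed

lemma weierstrass_cubics_independent:
  assumes "B ** A = mat 1"
    and "\<forall>x. l1 * weierstrass_cubic1 a b (B *v x) + l2 * weierstrass_cubic2 a b (B *v x) = 0"
  shows "l1 = 0 \<and> l2 = 0"
proof -
  have BA: "B *v (A *v e) = e" for e by (simp add: matrix_vector_mul_assoc assms(1))
  have "l2 = 0" using assms(2)[rule_format, of "A *v vector [0, 0, 0, 1, 0, 0]"]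
    by (simp add: BA weierstrass_cubic1_def weierstrass_cubic2_def)
  moreover have "l2 - l1 = 0" using assms(2)[rule_format, of "A *v vector [0, 0, 1, 1, 0, 0]"]
    by (simp add: BA weierstrass_cubic1_def weierstrass_cubic2_def)
  ultimately show ?thesis by simp
qed

lemma ell_normal_sextic_pencil:
  assumes "ell_normal_sextic C"
  obtains F1 F2 where "cubic_form F1" "cubic_form F2"
    "\<And>x. x \<in> C \<Longrightarrow> double_zero_at F1 x" "\<And>x. x \<in> C \<Longrightarrow> double_zero_at F2 x"
    "\<And>l1 l2. \<forall>x. l1 * F1 x + l2 * F2 x = 0 \<Longrightarrow> l1 = 0 \<and> l2 = 0"
proof -
  obtain a b A where "invertible A" and C: "C = cone ((\<lambda>v. A *v v) ` weierstrass_sextic a b)"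
    using assms unfolding ell_normal_sextic_def by blast
  then obtain B where BA: "B ** A = mat 1" using invertible_left_inverse by blast
  show ?thesis
  proof (rule that[of "\<lambda>x. weierstrass_cubic1 a b (B *v x)" "\<lambda>x. weierstrass_cubic2 a b (B *v x)"])
    show "cubic_form (\<lambda>x. weierstrass_cubic1 a b (B *v x))" "cubic_form (\<lambda>x. weierstrass_cubic2 a b (B *v x))"
      by (intro cubic_form_compose_matrix cubic_form_weierstrass_cubic1 cubic_form_weierstrass_cubic2)+
    show "double_zero_at (\<lambda>x. weierstrass_cubic1 a b (B *v x)) x" if "x \<in> C" for x
      using double_zero_on_sextic[OF BA that[unfolded C] cubic_form_weierstrass_cubic1]
        weierstrass_cubics_double_zero(1) by blast
    show "double_zero_at (\<lambda>x. weierstrass_cubic2 a b (B *v x)) x" if "x \<in> C" for x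
      using double_zero_on_sextic[OF BA that[unfolded C] cubic_form_weierstrass_cubic2]
        weierstrass_cubics_double_zero(2) by blast
  qed (use weierstrass_cubics_independent[OF BA] in blast)
qed

lemma secant_variety_zero_if_double_zeros:
  assumes "hom_poly 3 F" "\<And>x. x \<in> C \<Longrightarrow> double_zero_at F x"
  shows "\<forall>x\<in>secant_variety C. F x = 0"
proof -
  have "F (s *s u + t *s v) = 0" if "u \<in> C" "v \<in> C" for s t u v
    using cubic_vanishes_on_line[OF hom_poly3_cubic_form] assms that by blast
  then show ?thesis
    using assms(1) unfolding secant_variety_def zariski_closure_def by blast
qed

section \<open>Cubics singular at nine points\<close>

lemma UNIV_6: "(UNIV :: 6 set) = {0, 1, 2, 3, 4, 5}"
proof -
  have "i \<in> {0, 1, 2, 3, 4, 5}" for i :: 6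
  proof (induct i)
    case (of_int z)
    then have "z \<in> {0, 1, 2, 3, 4, 5}" by auto
    then show ?case by auto
  qed
  then show ?thesis by blast
qed

lemmas numeral_order_6 = less_eq_bit0_def less_bit0_def bit0.Rep_numeral bit0.Rep_0 bit0.Rep_1

lemma set_chained_triples:
  "set [(a, b, c). a \<leftarrow> xs, b \<leftarrow> xs, c \<leftarrow> xs, R a b, R b c] =
     {(a, b, c). a \<in> set xs \<and> b \<in> set xs \<and> c \<in> set xs \<and> R a b \<and> R b c}"
  by (auto simp: set_concat split: if_splits)

lemma card_cubic_monos_6: "card (cubic_monos :: (6 \<times> 6 \<times> 6) set) = 56"
proof -
  define L :: "(6 \<times> 6 \<times> 6) list" where
    "L = [(a, b, c). a \<leftarrow> [0, 1, 2, 3, 4, 5], b \<leftarrow> [0, 1, 2, 3, 4, 5], c \<leftarrow> [0, 1, 2, 3, 4, 5], a \<le> b, b \<le> c]"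
  have "cubic_monos = set L"
    unfolding L_def set_chained_triples cubic_monos_def by (simp add: UNIV_6[symmetric])
  moreover have "distinct L" "length L = 56" by (simp_all add: L_def numeral_order_6)
  ultimately show ?thesis by (metis distinct_card)
qed

text \<open>Columns of the singularity matrix are indexed by the monomials other than the two free ones;
  any bijection will do, since reordering columns only changes the sign of the determinant.\<close>

definition free_monos :: "(6 \<times> 6 \<times> 6) set" where
  "free_monos = {(0, 2, 4), (0, 2, 5)}"

definition column_mono :: "9 \<times> 6 \<Rightarrow> 6 \<times> 6 \<times> 6" where
  "column_mono = (SOME f. bij_betw f UNIV (cubic_monos - free_monos))"

lemma bij_column_mono: "bij_betw column_mono UNIV (cubic_monos - free_monos)"
proof -
  have "free_monos \<subseteq> cubic_monos" by (auto simp: free_monos_def cubic_monos_def numeral_order_6)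
  then have "card (cubic_monos - free_monos) = card (UNIV :: (9 \<times> 6) set)"
    by (simp add: card_Diff_subset card_cubic_monos_6 free_monos_def)
  then have "\<exists>f. bij_betw f (UNIV :: (9 \<times> 6) set) (cubic_monos - free_monos)"
    by (intro finite_same_card_bij) simp_all
  then show ?thesis unfolding column_mono_def by (rule someI_ex)
qed

definition singularity_matrix :: "(9 \<Rightarrow> complex^6) \<Rightarrow> complex^(9 \<times> 6)^(9 \<times> 6)" where
  "singularity_matrix p = (\<chi> r c. mono3_polar (column_mono c) (p (fst r)) (axis (snd r) 1))"

lemma singularity_matrix_mult:
  assumes "\<forall>t\<in>free_monos. d t = 0"
  shows "(singularity_matrix p *v (\<chi> c. d (column_mono c))) $ (k, i) = cubic_polar d (p k) (axis i 1)"
proof -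
  have "(singularity_matrix p *v (\<chi> c. d (column_mono c))) $ (k, i) =
      (\<Sum>c\<in>UNIV. d (column_mono c) * mono3_polar (column_mono c) (p k) (axis i 1))"
    by (simp add: matrix_vector_mult_def singularity_matrix_def mult.commute)
  also have "\<dots> = (\<Sum>t\<in>cubic_monos - free_monos. d t * mono3_polar t (p k) (axis i 1))"
    by (rule sum.reindex_bij_betw[OF bij_column_mono])
  also have "\<dots> = cubic_polar d (p k) (axis i 1)"
    unfolding cubic_polar_def using assms by (intro sum.mono_neutral_left) auto
  finally show ?thesis .
qed

lemma det_nonzero_iff_kernel_trivial:
  "det (M :: 'a::field^'n^'n) \<noteq> 0 \<longleftrightarrow> (\<forall>v. M *v v = 0 \<longrightarrow> v = 0)"
  by (metis invertible_det_nz invertible_left_inverse matrix_left_invertible_ker)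

lemma coeffs_vanish_if_det_singularity_matrix_nonzero:
  assumes "det (singularity_matrix p) \<noteq> 0" "\<forall>t\<in>free_monos. d t = 0"
    and "\<And>k i. cubic_polar d (p k) (axis i 1) = 0"
  shows "\<forall>t\<in>cubic_monos. d t = 0"
proof -
  have "singularity_matrix p *v (\<chi> c. d (column_mono c)) = 0"
    using assms(3) singularity_matrix_mult[OF assms(2)] by (simp add: vec_eq_iff)
  then have "(\<chi> c. d (column_mono c)) = 0"
    using assms(1) unfolding det_nonzero_iff_kernel_trivial by blast
  then have "d (column_mono c) = 0" for c
    using vec_lambda_beta[of "\<lambda>c. d (column_mono c)" c] by simp
  moreover have "cubic_monos - free_monos \<subseteq> range column_mono"
    using bij_betw_imp_surj_on[OF bij_column_mono] by simp
  ultimately show ?thesis using assms(2) by blast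
qed

lemma det_singularity_matrix_nonzero:
  assumes "\<And>d. \<forall>t\<in>free_monos. d t = 0 \<Longrightarrow> \<forall>k i. cubic_polar d (p k) (axis i 1) = 0 \<Longrightarrow>
    \<forall>t\<in>cubic_monos. d t = 0"
  shows "det (singularity_matrix p) \<noteq> 0"
  unfolding det_nonzero_iff_kernel_trivial
proof (intro allI impI)
  fix v assume Mv: "singularity_matrix p *v v = 0"
  define d where "d t = (if t \<in> free_monos then 0 else v $ inv column_mono t)" for t
  have "column_mono c \<notin> free_monos" "inv column_mono (column_mono c) = c" for c
    using bij_betw_apply[OF bij_column_mono] bij_betw_inv_into_left[OF bij_column_mono] by auto
  then have v: "(\<chi> c. d (column_mono c)) = v" by (simp add: d_def vec_eq_iff)
  have free: "\<forall>t\<in>free_monos. d t = 0" by (simp add: d_def)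
  have "cubic_polar d (p k) (axis i 1) = 0" for k i
    using singularity_matrix_mult[OF free, of p k i] Mv unfolding v by simp
  then have "\<forall>t\<in>cubic_monos. d t = 0" using assms free by blast
  then have "d (column_mono c) = 0" for c
    using bij_betw_apply[OF bij_column_mono] by blast
  then show "v = 0" unfolding v[symmetric] by (simp add: vec_eq_iff)
qed

lemma solve_2x2:
  fixes q11 q12 q21 q22 :: "'a::field"
  assumes "\<And>a1 a2. a1 * q11 + a2 * q21 = 0 \<Longrightarrow> a1 * q12 + a2 * q22 = 0 \<Longrightarrow> a1 = 0 \<and> a2 = 0"
  obtains l1 l2 where "y1 = l1 * q11 + l2 * q21" "y2 = l1 * q12 + l2 * q22"
proof -
  define D where "D = q11 * q22 - q21 * q12"
  have "D \<noteq> 0"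
  proof
    assume "D = 0"
    then have "q21 * q12 + (- q11) * q22 = 0" "q22 * q11 + (- q12) * q21 = 0"
      unfolding D_def by algebra+
    then have "q21 = 0 \<and> q11 = 0" "q22 = 0 \<and> q12 = 0"
      using assms[of q21 "- q11"] assms[of q22 "- q12"] by (simp_all add: mult.commute)
    then show False using assms[of 1 0] by simp
  qed
  define l1 where "l1 = (y1 * q22 - y2 * q21) / D"
  define l2 where "l2 = (q11 * y2 - q12 * y1) / D"
  have "(y1 * q22 - y2 * q21) * q11 + (q11 * y2 - q12 * y1) * q21 = y1 * D"
    "(y1 * q22 - y2 * q21) * q12 + (q11 * y2 - q12 * y1) * q22 = y2 * D"
    unfolding D_def by algebra+
  then have "y1 = l1 * q11 + l2 * q21" "y2 = l1 * q12 + l2 * q22"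
    using \<open>D \<noteq> 0\<close> by (simp_all add: l1_def l2_def add_divide_distrib[symmetric])
  then show ?thesis by (rule that)
qed

lemma singular_cubics_in_span:
  assumes det: "det (singularity_matrix p) \<noteq> 0"
    and cubic: "cubic_form F" "cubic_form F1" "cubic_form F2"
    and sing: "\<And>k i. partial F i (p k) = 0" "\<And>k i. partial F1 i (p k) = 0"
      "\<And>k i. partial F2 i (p k) = 0"
    and indep: "\<And>l1 l2. \<forall>x. l1 * F1 x + l2 * F2 x = 0 \<Longrightarrow> l1 = 0 \<and> l2 = 0"
  obtains l1 l2 where "\<And>x. F x = l1 * F1 x + l2 * F2 x"
proof -
  obtain d d1 d2 where F: "F = cubic d" "F1 = cubic d1" "F2 = cubic d2"
    using cubic unfolding cubic_form_def by blast
  define comb where "comb c c1 c2 = (\<lambda>t. c * d t + c1 * d1 t + c2 * d2 t)" for c c1 c2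
  have comb_vanishes: "c * F x + c1 * F1 x + c2 * F2 x = 0"
    if "comb c c1 c2 (0, 2, 4) = 0" "comb c c1 c2 (0, 2, 5) = 0" for c c1 c2 x
  proof -
    have "cubic_polar (comb c c1 c2) (p k) (axis i 1) = 0" for k i
      using sing by (simp add: comb_def cubic_polar_add cubic_polar_cmult F partial_cubic)
    then have "\<forall>t\<in>cubic_monos. comb c c1 c2 t = 0"
      using coeffs_vanish_if_det_singularity_matrix_nonzero[OF det] that
      unfolding free_monos_def by blast
    then have "cubic (comb c c1 c2) x = 0" by (simp add: cubic_def)
    then show ?thesis by (simp add: comb_def cubic_add cubic_cmult F)
  qed
  obtain l1 l2 where "d (0, 2, 4) = l1 * d1 (0, 2, 4) + l2 * d2 (0, 2, 4)"
    "d (0, 2, 5) = l1 * d1 (0, 2, 5) + l2 * d2 (0, 2, 5)"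
  proof (rule solve_2x2)
    fix a1 a2
    assume "a1 * d1 (0, 2, 4) + a2 * d2 (0, 2, 4) = 0" "a1 * d1 (0, 2, 5) + a2 * d2 (0, 2, 5) = 0"
    then have "\<forall>x. a1 * F1 x + a2 * F2 x = 0" using comb_vanishes[of 0 a1 a2] by (simp add: comb_def)
    then show "a1 = 0 \<and> a2 = 0" by (rule indep)
  qed
  then have "F x = l1 * F1 x + l2 * F2 x" for x
    using comb_vanishes[of 1 "- l1" "- l2" x] by (simp add: comb_def algebra_simps)
  then show ?thesis by (rule that)
qed

section \<open>The genericity condition\<close>

definition genericity_poly :: "(9 \<times> 6 \<Rightarrow> complex) \<Rightarrow> complex" where
  "genericity_poly P = det (singularity_matrix (\<lambda>k. \<chi> j. P (k, j)))"

lemma polyfun_genericity_poly: "polyfun genericity_poly"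
proof -
  have entry: "polyfun (\<lambda>P :: 9 \<times> 6 \<Rightarrow> complex. mono3_polar t (\<chi> j. P (k, j)) v)" for t k v
    by (cases t) (simp add: mono3_polar_def, intro polyfun_add polyfun_mult polyfun_var polyfun_const)
  have expand: "genericity_poly = (\<lambda>P. \<Sum>\<pi>\<in>{\<pi>. \<pi> permutes UNIV}. of_int (sign \<pi>) *
      (\<Prod>r\<in>UNIV. mono3_polar (column_mono (\<pi> r)) (\<chi> j. P (fst r, j)) (axis (snd r) 1)))"
    by (simp add: fun_eq_iff genericity_poly_def det_def singularity_matrix_def)
  show ?thesis
    unfolding expand by (intro polyfun_sum polyfun_mult polyfun_const polyfun_prod entry finite)
qed

lemma axis_nth_of_bool: "axis k (1::'a::comm_ring_1) $ j = of_bool (j = k)"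
  by (simp add: axis_def)

lemma mono3_polar_axis:
  "mono3_polar t (axis k 1) (axis i 1) = of_bool (t = (i, k, k)) + of_bool (t = (k, i, k)) + of_bool (t = (k, k, i))"
  by (cases t) (simp only: mono3_polar_def axis_nth_of_bool prod.case prod.inject of_bool_conj mult.assoc)

lemma cubic_polar_axis:
  "cubic_polar d (axis k 1) (axis i 1) =
    (if i < k then d (i, k, k) else if i = k then 3 * d (k, k, k) else d (k, k, i))"
proof -
  have "cubic_polar d (axis k 1) (axis i 1) =
      (if (i, k, k) \<in> cubic_monos then d (i, k, k) else 0) + (if (k, i, k) \<in> cubic_monos then d (k, i, k) else 0)
      + (if (k, k, i) \<in> cubic_monos then d (k, k, i) else 0)"
    by (simp add: cubic_polar_def mono3_polar_axis distrib_left sum.distrib)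
  then show ?thesis by (auto simp: cubic_monos_def)
qed

definition squarefree_monos :: "('n::linorder \<times> 'n \<times> 'n) set" where
  "squarefree_monos = {(a, b, c). a < b \<and> b < c}"

lemma coeffs_vanish_if_singular_at_axes:
  assumes "\<And>k i. cubic_polar d (axis k 1) (axis i 1) = 0" "t \<in> cubic_monos - squarefree_monos"
  shows "d t = 0"
proof -
  obtain a b c where t: "t = (a, b, c)" "a \<le> b" "b \<le> c" "a = b \<or> b = c"
    using assms(2) by (cases t) (auto simp: cubic_monos_def squarefree_monos_def)
  then consider "a = b" "b = c" | "a = b" "b < c" | "a < b" "b = c" by fastforce
  then show ?thesis
  proof cases
    case 1
    then show ?thesis using assms(1)[of a a] unfolding t(1) by (simp add: cubic_polar_axis)
  next
    case 2
    then have "\<not> c < b" "c \<noteq> b" by auto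
    then show ?thesis using assms(1)[of a c] 2 unfolding t(1) by (simp add: cubic_polar_axis)
  next
    case 3
    then show ?thesis using assms(1)[of c a] unfolding t(1) by (simp add: cubic_polar_axis)
  qed
qed

lemma cubic_polar_squarefree:
  assumes "\<And>t. t \<in> cubic_monos - squarefree_monos \<Longrightarrow> d t = 0"
  shows "cubic_polar d u v = (\<Sum>t\<in>squarefree_monos. d t * mono3_polar t u v)"
  unfolding cubic_polar_def using assms
  by (intro sum.mono_neutral_right) (auto simp: cubic_monos_def squarefree_monos_def)

lemma squarefree_monos_6:
  "(squarefree_monos :: (6 \<times> 6 \<times> 6) set) = set [(0, 1, 2), (0, 1, 3), (0, 1, 4), (0, 1, 5), (0, 2, 3),
     (0, 2, 4), (0, 2, 5), (0, 3, 4), (0, 3, 5), (0, 4, 5), (1, 2, 3), (1, 2, 4), (1, 2, 5), (1, 3, 4),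
     (1, 3, 5), (1, 4, 5), (2, 3, 4), (2, 3, 5), (2, 4, 5), (3, 4, 5)]"
proof -
  have "(squarefree_monos :: (6 \<times> 6 \<times> 6) set) =
      set [(a, b, c). a \<leftarrow> [0, 1, 2, 3, 4, 5], b \<leftarrow> [0, 1, 2, 3, 4, 5], c \<leftarrow> [0, 1, 2, 3, 4, 5], a < b, b < c]"
    unfolding set_chained_triples squarefree_monos_def by (simp add: UNIV_6[symmetric])
  then show ?thesis by (simp add: numeral_order_6)
qed

text \<open>The six coordinate points force the coefficients of all non-squarefree monomials to vanish
  (by cubic_polar_axis); the other three points impose a nonsingular 18 x 18 system on the
  remaining squarefree coefficients.\<close>

definition witness_points :: "9 \<Rightarrow> complex^6" where
  "witness_points k =
    (if k = 0 then axis 0 1 else if k = 1 then axis 1 1 else if k = 2 then axis 2 1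
     else if k = 3 then axis 3 1 else if k = 4 then axis 4 1 else if k = 5 then axis 5 1
     else if k = 6 then axis 2 1 + axis 3 1 + axis 4 1 + axis 5 1
     else if k = 7 then axis 0 1 + axis 1 1 + axis 4 1 + 2 *s axis 5 1
     else axis 0 1 + 2 *s axis 1 1 + axis 2 1 + 2 *s axis 3 1)"

lemma det_singularity_matrix_witness: "det (singularity_matrix witness_points) \<noteq> 0"
proof (rule det_singularity_matrix_nonzero)
  fix d :: "6 \<times> 6 \<times> 6 \<Rightarrow> complex"
  assume free: "\<forall>t\<in>free_monos. d t = 0"
    and sing: "\<forall>k i. cubic_polar d (witness_points k) (axis i 1) = 0"
  have "cubic_polar d (axis k 1) (axis i 1) = 0" for k i :: 6
  proof -
    have "k \<in> {0, 1, 2, 3, 4, 5}" using UNIV_6 by blast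
    then show ?thesis
      using sing[rule_format, of 0 i] sing[rule_format, of 1 i] sing[rule_format, of 2 i]
        sing[rule_format, of 3 i] sing[rule_format, of 4 i] sing[rule_format, of 5 i]
      by (auto simp: witness_points_def)
  qed
  then have nonsquarefree: "d t = 0" if "t \<in> cubic_monos - squarefree_monos" for t
    using that by (rule coeffs_vanish_if_singular_at_axes)
  then have polar_squarefree: "cubic_polar d u v = (\<Sum>t\<in>squarefree_monos. d t * mono3_polar t u v)" for u v
    by (rule cubic_polar_squarefree)
  have "cubic_polar d (witness_points k) (axis i 1) = 0" for k i using sing by blast
  note point_conditions = this[of 6 0] this[of 6 1] this[of 6 2] this[of 6 3] this[of 6 4] this[of 6 5]
    this[of 7 0] this[of 7 1] this[of 7 2] this[of 7 3] this[of 7 4] this[of 7 5]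
    this[of 8 0] this[of 8 1] this[of 8 2] this[of 8 3] this[of 8 4] this[of 8 5]
  have "d (0, 2, 4) = 0" "d (0, 2, 5) = 0" using free by (simp_all add: free_monos_def)
  note linear_system = point_conditions[simplified polar_squarefree squarefree_monos_6 numeral_order_6
      witness_points_def mono3_polar_def axis_def, simplified] this
  have "\<forall>t\<in>squarefree_monos - free_monos. d t = 0"
    unfolding squarefree_monos_6 free_monos_def
    apply (simp add: insert_Diff_if)
    apply (intro conjI)
    using linear_system by algebra+
  then show "\<forall>t\<in>cubic_monos. d t = 0" using free nonsquarefree by blast
qed

lemma genericity_poly_nonzero: "genericity_poly \<noteq> (\<lambda>_. 0)"
proof -
  have "genericity_poly (\<lambda>(k, j). witness_points k $ j) \<noteq> 0"
    using det_singularity_matrix_witness by (simp add: genericity_poly_def)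
  then show ?thesis using fun_cong[of genericity_poly "\<lambda>_. 0"] by auto
qed

theorem theorem2p3:
  "\<exists>G :: (9 \<times> 6 \<Rightarrow> complex) \<Rightarrow> complex. polyfun G \<and> G \<noteq> (\<lambda>_. 0) \<and>
     (\<forall>(p :: 9 \<Rightarrow> complex^6) C F.
        G (\<lambda>(k, j). p k $ j) \<noteq> 0 \<longrightarrow>
        ell_normal_sextic C \<longrightarrow> (\<forall>k. p k \<in> C) \<longrightarrow>
        hom_poly 3 F \<longrightarrow> F \<noteq> (\<lambda>_. 0) \<longrightarrow> (\<forall>k. singular_at F (p k)) \<longrightarrow>
        (\<forall>x\<in>secant_variety C. F x = 0) \<and> (\<forall>x\<in>C. singular_at F x))"
proof (intro exI[of _ genericity_poly] conjI polyfun_genericity_poly genericity_poly_nonzero allI impI)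
  fix p :: "9 \<Rightarrow> complex^6" and C F
  assume G: "genericity_poly (\<lambda>(k, j). p k $ j) \<noteq> 0" and C: "ell_normal_sextic C"
    and pC: "\<forall>k. p k \<in> C" and F: "hom_poly 3 F" and sing: "\<forall>k. singular_at F (p k)"
  have det: "det (singularity_matrix p) \<noteq> 0" using G by (simp add: genericity_poly_def)
  obtain F1 F2 where F12: "cubic_form F1" "cubic_form F2"
    "\<And>x. x \<in> C \<Longrightarrow> double_zero_at F1 x" "\<And>x. x \<in> C \<Longrightarrow> double_zero_at F2 x"
    "\<And>l1 l2. \<forall>x. l1 * F1 x + l2 * F2 x = 0 \<Longrightarrow> l1 = 0 \<and> l2 = 0"
    using ell_normal_sextic_pencil[OF C] by blast
  obtain l1 l2 where "\<And>x. F x = l1 * F1 x + l2 * F2 x"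
    using singular_cubics_in_span[OF det hom_poly3_cubic_form[OF F] F12(1,2) _ _ _ F12(5)]
      sing pC F12(3,4)[THEN double_zero_at_imp_singular_at]
    unfolding singular_at_def by metis
  then have "F = (\<lambda>x. l1 * F1 x + l2 * F2 x)" by auto
  then have double_zero: "double_zero_at F x" if "x \<in> C" for x
    by (simp add: double_zero_at_lincomb F12(3,4) that)
  show "\<forall>x\<in>secant_variety C. F x = 0"
    using F double_zero by (rule secant_variety_zero_if_double_zeros)
  show "\<forall>x\<in>C. singular_at F x"
    using double_zero double_zero_at_imp_singular_at by blast
qed

end
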